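(* Let $a\in\mathbb{R}$ and, for $\theta\in(2\pi/3,\pi)$ with $1-4a\cos^2\theta\neq0$, define \[ \zeta(\theta)=\frac{(2a-1)\cos\theta+\sqrt{(1-4a)\cos^2\theta+a}}{1-4a\cos^2\theta}. \] Then $|\zeta(\theta)|>1$ for every $a\in(-1,1/3)$ and every $\theta\in(2\pi/3,\pi)$ with $1-4a\cos^2\theta\neq0$.
   Context: For $a\in(-1,1/3)$ and $\theta\in(2\pi/3,\pi)$ the radicand $(1-4a)\cos^2\theta+a$ is positive, so $\zeta(\theta)$ is real. *)

theory Defs
  imports Complex_Main
begin

definition zeta :: "real \<Rightarrow> real \<Rightarrow> real" where
  "zeta a \<theta> = ((2*a - 1) * cos \<theta> + sqrt ((1 - 4*a) * (cos \<theta>)^2 + a))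
                 / (1 - 4*a*(cos \<theta>)^2)"

end

theory Submission
  imports Defs
begin

text \<open>With \<open>u = -cos \<theta> \<in> (1/2, 1)\<close>, the numerator of \<open>zeta a \<theta>\<close> is \<open>B + s\<close> with
  \<open>B = (1 - 2a) u > 0\<close> and \<open>s\<close> the square root of \<open>(1 - 4a) u\<^sup>2 + a = B\<^sup>2 + a D\<close>,
  where \<open>D = 1 - 4a u\<^sup>2\<close> is the denominator. So \<open>|zeta| > 1\<close> amounts to \<open>s > |D| - B\<close>,
  which follows from \<open>s\<^sup>2 > (|D| - B)\<^sup>2\<close>. The difference of the two sides is
  \<open>D (2u - 1)(1 + a(2u - 1))\<close> if \<open>D > 0\<close> and \<open>-D (1 + 2u)(1 - a(1 + 2u))\<close> if \<open>D < 0\<close>,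
  and both are positive for \<open>a \<in> (-1, 1/3)\<close>.\<close>

lemma cos_between_2pi3_pi:
  fixes \<theta> :: real
  assumes "2*pi/3 < \<theta>" and "\<theta> < pi"
  shows "-1 < cos \<theta>" and "cos \<theta> < -1/2"
proof -
  have "cos pi < cos \<theta>"
    using assms pi_gt_zero by (subst cos_mono_less_eq) auto
  then show "-1 < cos \<theta>" by simp
  have "cos \<theta> < cos (2*pi/3)"
    using assms pi_gt_zero by (subst cos_mono_less_eq) auto
  then show "cos \<theta> < -1/2" by (simp add: cos_120)
qed

lemma abs_denom_minus_sq_less_radicand:
  fixes a u :: real
  assumes "-1 < a" "a < 1/3" "1/2 < u" "u < 1"
    and "1 - 4*a*u^2 \<noteq> 0"
  shows "(\<bar>1 - 4*a*u^2\<bar> - (1 - 2*a)*u)^2 < (1 - 4*a)*u^2 + a"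
proof -
  define B where "B = (1 - 2*a)*u"
  define D where "D = 1 - 4*a*u^2"
  have radicand: "(1 - 4*a)*u^2 + a = B^2 + a*D"
    unfolding B_def D_def by (simp add: power2_eq_square algebra_simps)
  show ?thesis
  proof (cases "D > 0")
    case True
    have "a*(2*u - 1) > -1*(2*u - 1)"
      using assms by (intro mult_strict_right_mono) auto
    then have "1 + a*(2*u - 1) > 0" using assms by (simp add: algebra_simps)
    then have "D*(2*u - 1)*(1 + a*(2*u - 1)) > 0"
      using True assms by simp
    moreover have "B^2 + a*D - (D - B)^2 = D*(2*u - 1)*(1 + a*(2*u - 1))"
      unfolding B_def D_def by (simp add: power2_eq_square algebra_simps)
    ultimately show ?thesis
      using True radicand by (simp add: D_def B_def)
  next
    case False
    then have "D < 0" using assms(5) D_def by linarith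
    have "a*(1 + 2*u) < 1"
    proof (cases "a \<ge> 0")
      case True
      then have "a*(1 + 2*u) \<le> a*3" using assms by (intro mult_left_mono) auto
      then show ?thesis using assms by linarith
    next
      case False
      then have "a*(1 + 2*u) < 0" using assms by (intro mult_neg_pos) auto
      then show ?thesis by linarith
    qed
    then have "(- D)*(1 + 2*u)*(1 - a*(1 + 2*u)) > 0"
      using \<open>D < 0\<close> assms by (intro mult_pos_pos) auto
    moreover have "B^2 + a*D - (- D - B)^2 = (- D)*(1 + 2*u)*(1 - a*(1 + 2*u))"
      unfolding B_def D_def by (simp add: power2_eq_square algebra_simps)
    ultimately show ?thesis
      using \<open>D < 0\<close> radicand by (simp add: D_def B_def)
  qed
qed

lemma abs_divide_gt_one:
  fixes n d :: real
  assumes "d \<noteq> 0" and "\<bar>d\<bar> < n"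
  shows "\<bar>n / d\<bar> > 1"
  using assms by (simp add: abs_div)

theorem lemma2p5:
  fixes a \<theta> :: real
  assumes "-1 < a" and "a < 1/3"
    and "2*pi/3 < \<theta>" and "\<theta> < pi"
    and "1 - 4*a*(cos \<theta>)^2 \<noteq> 0"
  shows "\<bar>zeta a \<theta>\<bar> > 1"
proof -
  define u where "u = - cos \<theta>"
  have u: "1/2 < u" "u < 1"
    using cos_between_2pi3_pi[OF assms(3,4)] by (auto simp: u_def)
  have cos_sq: "(cos \<theta>)^2 = u^2" by (simp add: u_def)
  have "\<bar>1 - 4*a*u^2\<bar> - (1 - 2*a)*u < sqrt ((1 - 4*a)*u^2 + a)"
    using abs_denom_minus_sq_less_radicand[OF assms(1,2) u] assms(5) cos_sq
    by (intro real_less_rsqrt) simp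
  then have "\<bar>((1 - 2*a)*u + sqrt ((1 - 4*a)*u^2 + a)) / (1 - 4*a*u^2)\<bar> > 1"
    using assms(5) cos_sq by (intro abs_divide_gt_one) auto
  moreover have "zeta a \<theta> = ((1 - 2*a)*u + sqrt ((1 - 4*a)*u^2 + a)) / (1 - 4*a*u^2)"
    unfolding zeta_def cos_sq by (simp add: u_def algebra_simps)
  ultimately show ?thesis by simp
qed

end
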